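(* Fix $\rho\in(0,1)$. For $\varepsilon>0$ let $V_{\text{fair}}(\varepsilon)=\{\alpha\in[0,1]^{2k}:\sum_{x,p}\alpha_{x,p}\pi_{x,p}=\rho,\ |\alpha_{x,1}-\alpha_{x,0}|\le\varepsilon\ \forall x\}$ and $V_{\text{mask}}(\varepsilon)=\{\alpha\in[0,1]^{2k}:\sum_{x,p}\alpha_{x,p}\pi_{x,p}=\rho,\ |\sum_{x=1}^k\Pr(X=x)(\alpha_{x,1}-\alpha_{x,0})|\le\varepsilon\}$, and let $\mathrm{Vol}$ denote $(2k-1)$-dimensional volume (Lebesgue measure on the hyperplane $\sum_{x,p}\alpha_{x,p}\pi_{x,p}=\rho$). Then there exist constants $0<c\le C$ and $\varepsilon_0>0$ (depending on $k,\pi,\rho$) such that for all $\varepsilon\in(0,\varepsilon_0]$: $c\,\varepsilon^k\le\mathrm{Vol}(V_{\text{fair}}(\varepsilon))\le C\,\varepsilon^k$ and $c\,\varepsilon\le\mathrm{Vol}(V_{\text{mask}}(\varepsilon))\le C\,\varepsilon$.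
   Context: Fix an integer $k\ge 2$, $X\in\{1,\dots,k\}$, $P\in\{0,1\}$, $\pi_{x,p}=\Pr(X=x,P=p)>0$ with $\sum_{x,p}\pi_{x,p}=1$, and $\Pr(X=x)=\pi_{x,0}+\pi_{x,1}$. Policies are vectors $\alpha=(\alpha_{x,p})\in[0,1]^{2k}$. $V_{\text{fair}}(\varepsilon)$ and $V_{\text{mask}}(\varepsilon)$ are the feasible sets of the $\varepsilon$-relaxed fairness and masking problems. *)

theory Defs
  imports "HOL-Analysis.Analysis"
begin

text \<open>Policies alpha are vectors indexed by pairs (x,p), x in a finite type of
  cardinality k, p in bool (False = 0, True = 1). The joint law pi is a vector
  with the same index type.\<close>

definition Vfair :: "real^('x::finite \<times> bool) \<Rightarrow> real \<Rightarrow> real \<Rightarrow> (real^('x \<times> bool)) set" where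
  "Vfair \<pi> \<rho> \<epsilon> = {\<alpha>. (\<forall>i. 0 \<le> \<alpha>$i \<and> \<alpha>$i \<le> 1) \<and>
      (\<Sum>i\<in>UNIV. \<alpha>$i * \<pi>$i) = \<rho> \<and>
      (\<forall>x. \<bar>\<alpha>$(x,True) - \<alpha>$(x,False)\<bar> \<le> \<epsilon>)}"

definition Vmask :: "real^('x::finite \<times> bool) \<Rightarrow> real \<Rightarrow> real \<Rightarrow> (real^('x \<times> bool)) set" where
  "Vmask \<pi> \<rho> \<epsilon> = {\<alpha>. (\<forall>i. 0 \<le> \<alpha>$i \<and> \<alpha>$i \<le> 1) \<and>
      (\<Sum>i\<in>UNIV. \<alpha>$i * \<pi>$i) = \<rho> \<and>
      \<bar>\<Sum>x\<in>UNIV. (\<pi>$(x,False) + \<pi>$(x,True)) * (\<alpha>$(x,True) - \<alpha>$(x,False))\<bar> \<le> \<epsilon>}"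

text \<open>(n-1)-dimensional volume of a set V lying in a hyperplane with normal vector
  nv, defined (Cavalieri) as the Lebesgue measure of the unit-thickness slab
  swept by V along the unit normal.\<close>

definition hyp_volume :: "'a::euclidean_space \<Rightarrow> 'a set \<Rightarrow> real" where
  "hyp_volume nv V = measure lborel {a + t *\<^sub>R (nv /\<^sub>R norm nv) | a t. a \<in> V \<and> t \<in> {0..1}}"

end

theory Submission
  imports Defs
begin

(* Proof idea. hyp_volume V is the volume of the unit slab swept by V along the normal pi of the
   hyperplane sum_i alpha_i pi_i = rho. If psi is linear and injective on that hyperplane (one
   coordinate j of its value being ignored), the affine chart beta |-> (beta . pi, psi (projection
   of beta)) maps the slab onto a cylinder over psi ` V and has constant Jacobian; so hyp_volume V
   lies, up to one constant factor, between the volumes of boxes inside and around psi ` V.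
   For V_fair, psi records the gaps alpha_{x,1} - alpha_{x,0} and the levels alpha_{x,0} (x <> x0);
   for V_mask, the P(X)-weighted gap and all coordinates off x0. The constraints put psi ` V into a
   box with k (resp. one) sides of length 2 eps and all others of length 1. Conversely, a point of
   the hyperplane meeting the eps-constraint on the gaps whose other psi-coordinates are within a
   small tau of rho lies in [0,1]^{2k}: the pi-weighted mean of alpha - rho vanishes, which bounds
   the two coordinates at x0 by the others. Both boxes have volume of order eps^k resp. eps. *)

section \<open>Lebesgue measure under coordinate reindexing and linear maps\<close>

definition vec_reindex :: "('m \<Rightarrow> 'n) \<Rightarrow> real^'n \<Rightarrow> real^'m" where
  "vec_reindex e x = (\<chi> i. x $ e i)"

lemma vec_reindex_nth [simp]: "vec_reindex e x $ i = x $ e i"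
  by (simp add: vec_reindex_def)

lemma vec_reindex_inverse:
  assumes "bij e"
  shows "vec_reindex (inv e) (vec_reindex e x) = x" "vec_reindex e (vec_reindex (inv e) y) = y"
  using bij_is_inj[OF assms] bij_is_surj[OF assms] by (simp_all add: vec_eq_iff surj_f_inv_f)

lemma linear_vec_reindex: "linear (vec_reindex e)"
  by (auto intro!: linearI simp: vec_eq_iff)

lemma continuous_on_vec_reindex: "continuous_on A (vec_reindex e)"
  unfolding vec_reindex_def
  by (intro continuous_on_vec_lambda continuous_on_component continuous_on_id)

lemma vec_reindex_measurable: "vec_reindex e \<in> borel_measurable lborel"
  unfolding measurable_lborel2 by (intro borel_measurable_continuous_onI continuous_on_vec_reindex)

lemma vec_reindex_mem_box:
  assumes "surj e"
  shows "vec_reindex e a \<in> box (vec_reindex e l) (vec_reindex e u) \<longleftrightarrow> a \<in> box l u"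
  using assms by (simp add: mem_box_cart) (metis surj_def)

lemma Basis_le_iff_cart: "(\<forall>b\<in>Basis. l \<bullet> b \<le> u \<bullet> b) \<longleftrightarrow> (\<forall>j. l $ j \<le> (u :: real^'n) $ j)"
  by (auto simp: Basis_vec_def cart_eq_inner_axis)

lemma prod_Basis_cart: "(\<Prod>b\<in>Basis. (u - l) \<bullet> b) = (\<Prod>j\<in>UNIV. u $ j - (l :: real^'n) $ j)"
  by (simp add: Basis_vec_def cart_eq_inner_axis axis_eq_axis prod.UNION_disjoint inner_diff_left)

lemma lborel_vec_reindex:
  fixes e :: "'m::finite \<Rightarrow> 'n::finite"
  assumes "bij e"
  shows "(lborel :: (real^'n) measure) = distr lborel borel (vec_reindex (inv e))"
proof (rule lborel_eqI)
  fix l u :: "real^'n"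
  assume "\<And>b. b \<in> Basis \<Longrightarrow> l \<bullet> b \<le> u \<bullet> b"
  then have lu: "l $ j \<le> u $ j" for j
    using Basis_le_iff_cart by blast
  have "vec_reindex (inv e) -` box l u = box (vec_reindex e l) (vec_reindex e u)"
    using vec_reindex_mem_box[OF bij_is_surj[OF assms]] vec_reindex_inverse(2)[OF assms]
    by (metis (no_types) set_eqI vimage_eq)
  then have "emeasure (distr lborel borel (vec_reindex (inv e))) (box l u)
      = emeasure lborel (box (vec_reindex e l) (vec_reindex e u))"
    by (subst emeasure_distr[OF vec_reindex_measurable]) simp_all
  also have "\<dots> = (\<Prod>i\<in>UNIV. u $ e i - l $ e i)"
    using lu unfolding emeasure_lborel_box_eq Basis_le_iff_cart prod_Basis_cart by simp
  also have "\<dots> = (\<Prod>j\<in>UNIV. u $ j - l $ j)"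
    using prod.reindex_bij_betw[OF assms, of "\<lambda>j. u $ j - l $ j"] by simp
  finally show "emeasure (distr lborel borel (vec_reindex (inv e))) (box l u)
      = (\<Prod>b\<in>Basis. (u - l) \<bullet> b)"
    by (simp add: prod_Basis_cart)
qed simp

lemma measure_vec_reindex:
  fixes e :: "'m::finite \<Rightarrow> 'n::finite"
  assumes "bij e" "S \<in> sets borel"
  shows "measure lborel (vec_reindex e ` S) = measure lborel S"
proof -
  have "vec_reindex e ` S = vec_reindex (inv e) -` S"
    using vec_reindex_inverse[OF assms(1)] by (auto simp: image_iff) metis
  then show ?thesis
    by (subst lborel_vec_reindex[OF assms(1)])
      (simp add: measure_distr[OF vec_reindex_measurable assms(2)])
qed

text \<open>The library's change of variables for linear maps, \<open>measure_linear_image\<close>, needs a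
  well-ordered index type; reindexing the coordinates along a bijection with such a type
  transports it to any finite index type.\<close>

lemma measure_linear_image_reindex:
  fixes f :: "real^'n::finite \<Rightarrow> real^'n" and e :: "'m::{finite,wellorder} \<Rightarrow> 'n"
  assumes "bij e" "linear f" "compact S"
  shows "measure lborel (f ` S)
    = \<bar>det (matrix (vec_reindex e \<circ> f \<circ> vec_reindex (inv e)))\<bar> * measure lborel S"
proof -
  let ?R = "vec_reindex e" and ?f' = "vec_reindex e \<circ> f \<circ> vec_reindex (inv e)"
  have "linear ?f'"
    using assms(2) by (intro linear_compose linear_vec_reindex)
  have cont: "continuous_on A g" if "linear g" for A and g :: "real^'k::finite \<Rightarrow> real^'l::finite"
    using that by (simp add: linear_conv_bounded_linear linear_continuous_on)
  have fS: "compact (f ` S)"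
    using compact_continuous_image[OF cont[OF assms(2)] assms(3)] .
  have RS: "compact (?R ` S)"
    using compact_continuous_image[OF cont[OF linear_vec_reindex] assms(3)] .
  have f'RS: "compact (?f' ` ?R ` S)"
    using compact_continuous_image[OF cont[OF \<open>linear ?f'\<close>] RS] .
  have "?R ` f ` S = ?f' ` ?R ` S"
    by (auto simp: image_comp vec_reindex_inverse[OF assms(1)])
  then have "measure lborel (f ` S) = measure lborel (?f' ` ?R ` S)"
    using measure_vec_reindex[OF assms(1) borel_compact[OF fS]] by simp
  also have "\<dots> = measure lebesgue (?f' ` ?R ` S)"
    using borel_compact[OF f'RS] by simp
  also have "\<dots> = \<bar>det (matrix ?f')\<bar> * measure lebesgue (?R ` S)"
    using measure_linear_image[OF \<open>linear ?f'\<close> lmeasurable_compact[OF RS]] .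
  also have "\<dots> = \<bar>det (matrix ?f')\<bar> * measure lborel S"
    using measure_vec_reindex[OF assms(1) borel_compact[OF assms(3)]] borel_compact[OF RS] by simp
  finally show ?thesis .
qed

lemma det_reindex_nonzero:
  fixes f :: "real^'n::finite \<Rightarrow> real^'n" and e :: "'m::finite \<Rightarrow> 'n"
  assumes "bij e" "linear f" "inj f"
  shows "det (matrix (vec_reindex e \<circ> f \<circ> vec_reindex (inv e))) \<noteq> 0"
proof -
  have "inj (vec_reindex e \<circ> f \<circ> vec_reindex (inv e))"
    using assms(3) vec_reindex_inverse[OF assms(1)] by (simp add: inj_def) metis
  then show ?thesis
    using assms(2) by (simp add: det_nz_iff_inj linear_compose linear_vec_reindex)
qed

section \<open>Slabs over subsets of a hyperplane\<close>

lemma inner_vec_real: "inner \<alpha> \<pi> = (\<Sum>i\<in>UNIV. \<alpha> $ i * \<pi> $ i)" for \<alpha> \<pi> :: "real^'n"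
  by (simp add: inner_vec_def)

definition hyperplane_proj :: "'a::real_inner \<Rightarrow> real \<Rightarrow> 'a \<Rightarrow> 'a" where
  "hyperplane_proj nv \<rho> \<beta> = \<beta> - ((inner \<beta> nv - \<rho>) / (norm nv)\<^sup>2) *\<^sub>R nv"

lemma inner_hyperplane_proj: "nv \<noteq> 0 \<Longrightarrow> inner (hyperplane_proj nv \<rho> \<beta>) nv = \<rho>"
  by (simp add: hyperplane_proj_def inner_diff_left power2_norm_eq_inner)

lemma hyperplane_proj_split:
  "hyperplane_proj nv \<rho> \<beta> = hyperplane_proj nv 0 \<beta> + (\<rho> / (norm nv)\<^sup>2) *\<^sub>R nv"
  by (simp add: hyperplane_proj_def diff_divide_distrib algebra_simps)

lemma linear_hyperplane_proj: "linear (hyperplane_proj nv 0)"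
  by (auto intro!: linearI simp: hyperplane_proj_def add_divide_distrib algebra_simps)

definition slab :: "'a::real_normed_vector \<Rightarrow> 'a set \<Rightarrow> 'a set" where
  "slab nv V = {a + t *\<^sub>R (nv /\<^sub>R norm nv) | a t. a \<in> V \<and> t \<in> {0..1}}"

lemma hyp_volume_slab: "hyp_volume nv V = measure lborel (slab nv V)"
  by (simp add: hyp_volume_def slab_def)

lemma compact_slab:
  assumes "compact V"
  shows "compact (slab nv V)"
proof -
  have "slab nv V = (\<lambda>p. fst p + snd p *\<^sub>R (nv /\<^sub>R norm nv)) ` (V \<times> {0..1})"
    by (force simp: slab_def)
  moreover have "continuous_on (V \<times> {0..1}) (\<lambda>p. fst p + snd p *\<^sub>R (nv /\<^sub>R norm nv))"
    by (intro continuous_intros)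
  ultimately show ?thesis
    using assms by (simp add: compact_continuous_image compact_Times)
qed

lemma mem_slab_iff:
  fixes nv :: "'a::real_inner"
  assumes "nv \<noteq> 0" and V: "\<And>\<alpha>. \<alpha> \<in> V \<Longrightarrow> inner \<alpha> nv = \<rho>"
  shows "\<beta> \<in> slab nv V \<longleftrightarrow>
    \<rho> \<le> inner \<beta> nv \<and> inner \<beta> nv \<le> \<rho> + norm nv \<and> hyperplane_proj nv \<rho> \<beta> \<in> V"
proof
  assume "\<beta> \<in> slab nv V"
  then obtain a t where \<beta>: "\<beta> = a + t *\<^sub>R (nv /\<^sub>R norm nv)" "a \<in> V" "t \<in> {0..1}"
    by (auto simp: slab_def)
  have "inner \<beta> nv = \<rho> + t * norm nv"
    using \<beta> V[of a] assms(1)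
    by (simp add: inner_add_left power2_norm_eq_inner[symmetric] power2_eq_square)
  moreover have "hyperplane_proj nv \<rho> \<beta> = a"
    using \<beta>(1) assms(1) calculation
    by (simp add: hyperplane_proj_def power2_eq_square divide_inverse)
  ultimately show "\<rho> \<le> inner \<beta> nv \<and> inner \<beta> nv \<le> \<rho> + norm nv \<and> hyperplane_proj nv \<rho> \<beta> \<in> V"
    using \<beta>(2,3) by (simp add: mult_left_le_one_le)
next
  assume h: "\<rho> \<le> inner \<beta> nv \<and> inner \<beta> nv \<le> \<rho> + norm nv \<and> hyperplane_proj nv \<rho> \<beta> \<in> V"
  define t where "t = (inner \<beta> nv - \<rho>) / norm nv"
  have "\<beta> = hyperplane_proj nv \<rho> \<beta> + t *\<^sub>R (nv /\<^sub>R norm nv)"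
    using assms(1) by (simp add: hyperplane_proj_def t_def power2_eq_square field_simps)
  moreover have "t \<in> {0..1}"
    using h assms(1) by (auto simp: t_def field_simps)
  ultimately show "\<beta> \<in> slab nv V"
    using h unfolding slab_def by blast
qed

lemma card_Compl_singleton: "card (- {a :: 'a::finite}) = CARD('a) - 1"
  by (simp add: Compl_eq_Diff_UNIV card_Diff_singleton)

lemma measure_cbox_split_coordinate:
  fixes t :: "real^'n::finite"
  assumes "0 \<le> h" "\<And>i. 0 \<le> r i"
  shows "measure lborel (cbox ((\<chi> i. if i = j then a else c i - r i) - t)
      ((\<chi> i. if i = j then a + h else c i + r i) - t)) = h * 2 ^ (CARD('n) - 1) * (\<Prod>i\<in>-{j}. r i)"
    (is "measure lborel (cbox ?l ?u) = _")
proof -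
  have "cbox ?l ?u \<noteq> {}"
    using assms by (simp add: interval_ne_empty_cart)
  then have "measure lborel (cbox ?l ?u) = (\<Prod>i\<in>UNIV. if i = j then h else 2 * r i)"
    by (auto simp: content_cbox_cart intro!: prod.cong split: if_splits)
  also have "\<dots> = h * (\<Prod>i\<in>-{j}. 2 * r i)"
    by (simp add: prod.remove[of UNIV j] Compl_eq_Diff_UNIV)
  finally show ?thesis
    by (simp add: prod.distrib card_Compl_singleton)
qed

text \<open>The affine chart \<open>\<beta> \<mapsto> (\<beta> \<bullet> nv, \<psi> (hyperplane_proj nv \<rho> \<beta>))\<close> maps the slab over V onto
  a cylinder of height \<open>norm nv\<close> over the image of V, and it has constant Jacobian; so box
  bounds on the image of V transfer to \<open>hyp_volume\<close>.\<close>

locale hyperplane_chart =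
  fixes e :: "'m::{finite,wellorder} \<Rightarrow> 'n::finite" and nv :: "real^'n"
    and \<psi> :: "real^'n \<Rightarrow> real^'n" and j :: 'n and \<rho> :: real
  assumes bij_e: "bij e" and nv_nonzero: "nv \<noteq> 0" and linear_\<psi>: "linear \<psi>"
    and kernel: "\<And>\<gamma>. inner \<gamma> nv = 0 \<Longrightarrow> (\<And>i. i \<noteq> j \<Longrightarrow> \<psi> \<gamma> $ i = 0) \<Longrightarrow> \<gamma> = 0"
begin

definition chart_lin :: "real^'n \<Rightarrow> real^'n" where
  "chart_lin \<beta> = (\<chi> i. if i = j then inner \<beta> nv else \<psi> (hyperplane_proj nv 0 \<beta>) $ i)"

definition chart_shift :: "real^'n" where
  "chart_shift = (\<chi> i. if i = j then 0 else \<rho> / (norm nv)\<^sup>2 * \<psi> nv $ i)"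

definition chart_jacobian :: real where
  "chart_jacobian = \<bar>det (matrix (vec_reindex e \<circ> chart_lin \<circ> vec_reindex (inv e)))\<bar>"

definition chart_factor :: real where
  "chart_factor = norm nv * 2 ^ (CARD('n) - 1) / chart_jacobian"

definition chart_box :: "('n \<Rightarrow> real) \<Rightarrow> ('n \<Rightarrow> real) \<Rightarrow> (real^'n) set" where
  "chart_box c r = cbox ((\<chi> i. if i = j then \<rho> else c i - r i) - chart_shift)
    ((\<chi> i. if i = j then \<rho> + norm nv else c i + r i) - chart_shift)"

lemma linear_chart_lin: "linear chart_lin"
proof -
  have "linear (\<psi> \<circ> hyperplane_proj nv 0)"
    using linear_hyperplane_proj linear_\<psi> by (rule linear_compose)
  then show ?thesis
    unfolding chart_lin_def using linear_add linear_scale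
    by (intro linearI) (fastforce simp: vec_eq_iff inner_add_left)+
qed

lemma inj_chart_lin: "inj chart_lin"
  unfolding linear_injective_0[OF linear_chart_lin]
proof (intro allI impI)
  fix \<gamma> assume "chart_lin \<gamma> = 0"
  then have "inner \<gamma> nv = 0"
    by (auto simp: chart_lin_def vec_eq_iff dest: spec[of _ j])
  moreover have "\<psi> \<gamma> $ i = 0" if "i \<noteq> j" for i
    using \<open>chart_lin \<gamma> = 0\<close> that calculation
    by (auto simp: chart_lin_def hyperplane_proj_def vec_eq_iff dest: spec[of _ i])
  ultimately show "\<gamma> = 0"
    using kernel by metis
qed

lemma chart_lin_add_shift:
  "chart_lin \<beta> + chart_shift = (\<chi> i. if i = j then inner \<beta> nv else \<psi> (hyperplane_proj nv \<rho> \<beta>) $ i)"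
  by (simp add: chart_lin_def chart_shift_def vec_eq_iff hyperplane_proj_split[of nv \<rho>]
      linear_add[OF linear_\<psi>] linear_scale[OF linear_\<psi>])

lemma chart_jacobian_pos: "chart_jacobian > 0"
  using det_reindex_nonzero[OF bij_e linear_chart_lin inj_chart_lin]
  by (simp add: chart_jacobian_def)

lemma chart_factor_pos: "chart_factor > 0"
  using chart_jacobian_pos nv_nonzero by (simp add: chart_factor_def)

lemma mem_chart_box_iff:
  "chart_lin \<beta> \<in> chart_box c r \<longleftrightarrow> \<rho> \<le> inner \<beta> nv \<and> inner \<beta> nv \<le> \<rho> + norm nv \<and>
    (\<forall>i. i \<noteq> j \<longrightarrow> \<bar>\<psi> (hyperplane_proj nv \<rho> \<beta>) $ i - c i\<bar> \<le> r i)"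
  using chart_lin_add_shift[of \<beta>] unfolding chart_box_def mem_box_cart eq_diff_eq[symmetric]
  by (auto simp: abs_le_iff le_diff_eq diff_le_eq add.commute split: if_splits)

lemma measure_chart_box:
  "(\<And>i. 0 \<le> r i) \<Longrightarrow>
    measure lborel (chart_box c r) = chart_jacobian * chart_factor * (\<Prod>i\<in>-{j}. r i)"
  using chart_jacobian_pos unfolding chart_box_def chart_factor_def
  by (subst measure_cbox_split_coordinate) simp_all

lemma measure_chart_lin_slab:
  assumes "compact V"
  shows "measure lborel (chart_lin ` slab nv V) = chart_jacobian * hyp_volume nv V"
  using measure_linear_image_reindex[OF bij_e linear_chart_lin compact_slab[OF assms]]
  by (simp add: chart_jacobian_def hyp_volume_slab)

lemma compact_chart_lin_slab: "compact V \<Longrightarrow> compact (chart_lin ` slab nv V)"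
  using linear_chart_lin compact_slab
  by (intro compact_continuous_image)
    (simp_all add: linear_conv_bounded_linear linear_continuous_on)

lemma hyp_volume_lower_bound:
  assumes "compact V" and V: "\<And>\<alpha>. \<alpha> \<in> V \<Longrightarrow> inner \<alpha> nv = \<rho>" and r: "\<And>i. 0 \<le> r i"
    and inner_box: "\<And>\<alpha>. inner \<alpha> nv = \<rho> \<Longrightarrow> (\<And>i. i \<noteq> j \<Longrightarrow> \<bar>\<psi> \<alpha> $ i - c i\<bar> \<le> r i) \<Longrightarrow> \<alpha> \<in> V"
  shows "chart_factor * (\<Prod>i\<in>-{j}. r i) \<le> hyp_volume nv V"
proof -
  have "chart_box c r \<subseteq> chart_lin ` slab nv V"
  proof
    fix y assume "y \<in> chart_box c r"
    moreover obtain \<beta> where "y = chart_lin \<beta>"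
      using linear_injective_imp_surjective[OF linear_chart_lin inj_chart_lin] by (metis surjD)
    ultimately have "\<beta> \<in> slab nv V"
      using mem_chart_box_iff mem_slab_iff[OF nv_nonzero V] inner_box
        inner_hyperplane_proj[OF nv_nonzero]
      by metis
    then show "y \<in> chart_lin ` slab nv V"
      using \<open>y = chart_lin \<beta>\<close> by blast
  qed
  then have "measure lborel (chart_box c r) \<le> measure lborel (chart_lin ` slab nv V)"
    using compact_chart_lin_slab[OF assms(1)]
    by (intro measure_mono_fmeasurable) (auto simp: chart_box_def fmeasurable_compact)
  then show ?thesis
    using measure_chart_lin_slab[OF assms(1)] measure_chart_box[OF r] chart_jacobian_pos
    by (simp add: mult.assoc mult_le_cancel_left_pos)
qed

lemma hyp_volume_upper_bound:
  assumes "compact V" and V: "\<And>\<alpha>. \<alpha> \<in> V \<Longrightarrow> inner \<alpha> nv = \<rho>" and r: "\<And>i. 0 \<le> r i"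
    and outer_box: "\<And>\<alpha> i. \<alpha> \<in> V \<Longrightarrow> i \<noteq> j \<Longrightarrow> \<bar>\<psi> \<alpha> $ i - c i\<bar> \<le> r i"
  shows "hyp_volume nv V \<le> chart_factor * (\<Prod>i\<in>-{j}. r i)"
proof -
  have "chart_lin ` slab nv V \<subseteq> chart_box c r"
    using mem_chart_box_iff mem_slab_iff[OF nv_nonzero V] outer_box by blast
  then have "measure lborel (chart_lin ` slab nv V) \<le> measure lborel (chart_box c r)"
    using compact_chart_lin_slab[OF assms(1)]
    by (intro measure_mono_fmeasurable) (auto simp: chart_box_def borel_compact)
  then show ?thesis
    using measure_chart_lin_slab[OF assms(1)] measure_chart_box[OF r] chart_jacobian_pos
    by (simp add: mult.assoc mult_le_cancel_left_pos)
qed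

end

section \<open>Policies on pairs (x, p)\<close>

lemma bij_bit0_prod_bool: "\<exists>e :: 'a::finite bit0 \<Rightarrow> 'a \<times> bool. bij e"
  using finite_same_card_bij[of "UNIV :: 'a bit0 set" "UNIV :: ('a \<times> bool) set"] by simp

lemma sum_pairs:
  "(\<Sum>i\<in>UNIV. f i) = (\<Sum>x\<in>UNIV. f (x, False) + f (x, True))"
  for f :: "'a::finite \<times> bool \<Rightarrow> 'b::comm_monoid_add"
  unfolding UNIV_Times_UNIV[symmetric] sum.cartesian_product' by (simp add: UNIV_bool add.commute)

lemma sum_pairs_remove:
  "(\<Sum>i\<in>UNIV. f i) = f (x0, False) + f (x0, True) + (\<Sum>x\<in>-{x0}. f (x, False) + f (x, True))"
  for f :: "'a::finite \<times> bool \<Rightarrow> 'b::comm_monoid_add"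
  by (simp add: sum_pairs sum.remove[of UNIV x0] Compl_eq_Diff_UNIV add.assoc)

lemma prod_Compl_pair:
  "(\<Prod>i\<in>-{(x0, False)}. f i) = (\<Prod>x\<in>UNIV. f (x, True)) * (\<Prod>x\<in>-{x0}. f (x, False))"
  for f :: "'a::finite \<times> bool \<Rightarrow> 'b::comm_monoid_mult"
proof -
  have split: "-{(x0, False)} = range (\<lambda>x. (x, True)) \<union> (\<lambda>x. (x, False)) ` (-{x0})"
    by auto
  have "(\<Prod>i\<in>-{(x0, False)}. f i)
      = (\<Prod>i\<in>range (\<lambda>x. (x, True)). f i) * (\<Prod>i\<in>(\<lambda>x. (x, False)) ` (-{x0}). f i)"
    unfolding split by (rule prod.union_disjoint) auto
  then show ?thesis
    by (simp add: prod.reindex inj_on_def)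
qed

lemma pair_deviation_bound:
  fixes p q a b r d :: real
  assumes "0 < p" "0 < q" "\<bar>p * a + q * b\<bar> \<le> r" "\<bar>b - a\<bar> \<le> d"
  shows "\<bar>a\<bar> \<le> d + r / (p + q)"
proof -
  have "\<bar>q * (b - a)\<bar> \<le> q * d"
    using assms(2,4) by (simp add: abs_mult mult_left_mono)
  have "(p + q) * \<bar>a\<bar> = \<bar>(p + q) * a\<bar>"
    using assms(1,2) by (simp add: abs_mult)
  also have "\<dots> = \<bar>(p * a + q * b) - q * (b - a)\<bar>"
    by (simp add: algebra_simps)
  also have "\<dots> \<le> r + q * d"
    using abs_triangle_ineq4[of "p * a + q * b" "q * (b - a)"] assms(3) \<open>\<bar>q * (b - a)\<bar> \<le> q * d\<close>
    by linarith
  also have "\<dots> \<le> r + (p + q) * d"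
    using assms(1,4) by (simp add: distrib_right)
  finally show ?thesis
    using assms(1,2) by (simp add: field_simps)
qed

definition fair_chart :: "real^('x::finite \<times> bool) \<Rightarrow> real^('x \<times> bool)" where
  "fair_chart \<alpha> = (\<chi> i. if snd i then \<alpha> $ (fst i, True) - \<alpha> $ (fst i, False) else \<alpha> $ i)"

lemma linear_fair_chart: "linear fair_chart"
  by (auto intro!: linearI simp: fair_chart_def vec_eq_iff algebra_simps)

lemma closed_Vfair: "closed (Vfair \<pi> \<rho> \<epsilon>)"
  unfolding Vfair_def
  by (intro closed_Collect_conj closed_Collect_all closed_Collect_le closed_Collect_eq
      continuous_intros)

lemma closed_Vmask: "closed (Vmask \<pi> \<rho> \<epsilon>)"
  unfolding Vmask_def
  by (intro closed_Collect_conj closed_Collect_all closed_Collect_le closed_Collect_eq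
      continuous_intros)

lemma compact_Vfair: "compact (Vfair \<pi> \<rho> \<epsilon>)"
  unfolding compact_eq_bounded_closed
  by (simp add: closed_Vfair)
    (rule bounded_subset[OF bounded_cbox[of 0 1]], auto simp: Vfair_def mem_box_cart)

lemma compact_Vmask: "compact (Vmask \<pi> \<rho> \<epsilon>)"
  unfolding compact_eq_bounded_closed
  by (simp add: closed_Vmask)
    (rule bounded_subset[OF bounded_cbox[of 0 1]], auto simp: Vmask_def mem_box_cart)

lemma prod_fair_box:
  "(\<Prod>i\<in>-{(x0, False)}. if snd i then u else v) = u ^ CARD('x) * v ^ (CARD('x) - 1)"
  for x0 :: "'x::finite" and u v :: real
  unfolding prod_Compl_pair by (simp add: card_Compl_singleton)

lemma prod_mask_box:
  "(\<Prod>i\<in>-{(x0, False)}. if i = (x0, True) then u else v) = u * (v ^ (CARD('x) - 1))\<^sup>2"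
  for x0 :: "'x::finite" and u v :: real
  unfolding prod_Compl_pair
  by (simp add: prod.If_cases Compl_eq_Diff_UNIV card_Diff_singleton power2_eq_square)

lemma Vfair_hyperplane: "\<alpha> \<in> Vfair \<pi> \<rho> \<epsilon> \<Longrightarrow> inner \<alpha> \<pi> = \<rho>"
  by (simp add: Vfair_def inner_vec_real)

lemma Vmask_hyperplane: "\<alpha> \<in> Vmask \<pi> \<rho> \<epsilon> \<Longrightarrow> inner \<alpha> \<pi> = \<rho>"
  by (simp add: Vmask_def inner_vec_real)

locale joint_law =
  fixes \<pi> :: "real^('x::finite \<times> bool)" and \<rho> :: real
  assumes pi_pos: "\<And>i. 0 < \<pi> $ i" and pi_sum: "(\<Sum>i\<in>UNIV. \<pi> $ i) = 1"
    and rho_pos: "0 < \<rho>" and rho_less_one: "\<rho> < 1"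
begin

definition marginal :: "'x \<Rightarrow> real" where
  "marginal x = \<pi> $ (x, False) + \<pi> $ (x, True)"

definition slack :: real where
  "slack = min \<rho> (1 - \<rho>)"

lemma marginal_pos: "0 < marginal x"
  using pi_pos by (simp add: marginal_def add_pos_pos)

lemma sum_marginal_le_one: "(\<Sum>x\<in>A. marginal x) \<le> 1"
proof -
  have "(\<Sum>x\<in>A. marginal x) \<le> (\<Sum>x\<in>UNIV. marginal x)"
    using marginal_pos by (intro sum_mono2) (auto intro: less_imp_le)
  also have "\<dots> = 1"
    using pi_sum by (simp add: marginal_def sum_pairs)
  finally show ?thesis .
qed

lemma marginal_le_one: "marginal x \<le> 1"
  using sum_marginal_le_one[of "{x}"] by simp

lemma slack_pos: "0 < slack"
  using rho_pos rho_less_one by (simp add: slack_def)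

lemma pi_nonzero: "\<pi> \<noteq> 0"
  using pi_pos[of undefined] by auto

lemma unit_interval_if_near_rho: "\<bar>a - \<rho>\<bar> \<le> slack \<Longrightarrow> 0 \<le> a \<and> a \<le> 1"
  by (auto simp: slack_def abs_le_iff)

lemma abs_sum_Compl_le:
  assumes "0 \<le> B" "\<And>x. x \<noteq> x0 \<Longrightarrow> \<bar>f x\<bar> \<le> marginal x * B"
  shows "\<bar>\<Sum>x\<in>-{x0}. f x\<bar> \<le> B"
proof -
  have "\<bar>\<Sum>x\<in>-{x0}. f x\<bar> \<le> (\<Sum>x\<in>-{x0}. marginal x * B)"
    using assms(2) by (intro order_trans[OF sum_abs sum_mono]) auto
  also have "\<dots> \<le> B"
    using mult_right_mono[OF sum_marginal_le_one assms(1), of "-{x0}"] by (simp flip: sum_distrib_right)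
  finally show ?thesis .
qed

lemma deviation_at_x0:
  assumes "(\<Sum>i\<in>UNIV. \<alpha> $ i * \<pi> $ i) = \<rho>" "0 \<le> B"
    and off: "\<And>x b. x \<noteq> x0 \<Longrightarrow> \<bar>\<alpha> $ (x, b) - \<rho>\<bar> \<le> B"
    and diff: "\<bar>\<alpha> $ (x0, True) - \<alpha> $ (x0, False)\<bar> \<le> d"
  shows "\<bar>\<alpha> $ (x0, b) - \<rho>\<bar> \<le> d + B / marginal x0"
proof -
  define \<delta> where "\<delta> i = \<alpha> $ i - \<rho>" for i
  have "(\<Sum>i\<in>UNIV. \<pi> $ i * \<delta> i) = (\<Sum>i\<in>UNIV. \<alpha> $ i * \<pi> $ i) - \<rho> * (\<Sum>i\<in>UNIV. \<pi> $ i)"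
    by (simp add: \<delta>_def algebra_simps sum_subtractf sum_distrib_left)
  then have "\<pi> $ (x0, False) * \<delta> (x0, False) + \<pi> $ (x0, True) * \<delta> (x0, True)
      = - (\<Sum>x\<in>-{x0}. \<pi> $ (x, False) * \<delta> (x, False) + \<pi> $ (x, True) * \<delta> (x, True))"
    using assms(1) pi_sum by (simp add: sum_pairs_remove[of _ x0] add.assoc eq_neg_iff_add_eq_0)
  also have "\<bar>\<dots>\<bar> \<le> B"
  proof (simp only: abs_minus_cancel, rule abs_sum_Compl_le[OF assms(2)])
    fix x assume "x \<noteq> x0"
    then have "\<bar>\<pi> $ (x, b) * \<delta> (x, b)\<bar> \<le> \<pi> $ (x, b) * B" for b
      using off pi_pos[of "(x, b)"] by (simp add: \<delta>_def abs_mult mult_left_mono)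
    then show "\<bar>\<pi> $ (x, False) * \<delta> (x, False) + \<pi> $ (x, True) * \<delta> (x, True)\<bar> \<le> marginal x * B"
      unfolding marginal_def distrib_right by (meson abs_triangle_ineq add_mono order_trans)
  qed
  finally have "\<bar>\<pi> $ (x0, False) * \<delta> (x0, False) + \<pi> $ (x0, True) * \<delta> (x0, True)\<bar> \<le> B" .
  moreover have "\<bar>\<delta> (x0, True) - \<delta> (x0, False)\<bar> \<le> d"
    using diff by (simp add: \<delta>_def)
  ultimately have "\<bar>\<delta> (x0, False)\<bar> \<le> d + B / marginal x0" "\<bar>\<delta> (x0, True)\<bar> \<le> d + B / marginal x0"
    using pair_deviation_bound[of "\<pi> $ (x0, False)" "\<pi> $ (x0, True)" "\<delta> (x0, False)" "\<delta> (x0, True)"]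
      pair_deviation_bound[of "\<pi> $ (x0, True)" "\<pi> $ (x0, False)" "\<delta> (x0, True)" "\<delta> (x0, False)"]
      pi_pos
    by (simp_all add: marginal_def add.commute abs_minus_commute)
  then show ?thesis
    by (cases b) (simp_all add: \<delta>_def)
qed

text \<open>The tolerances are chosen so that \<open>deviation_at_x0\<close> keeps every coordinate within
  \<open>slack\<close> of \<rho>.\<close>

definition fair_tol :: "'x \<Rightarrow> real" where
  "fair_tol x0 = marginal x0 * slack / 3"

definition mask_tol :: "'x \<Rightarrow> real" where
  "mask_tol x0 = marginal x0 * slack / 4"

lemma fair_inner_box:
  assumes "(\<Sum>i\<in>UNIV. \<alpha> $ i * \<pi> $ i) = \<rho>" "0 \<le> \<epsilon>" "\<epsilon> \<le> fair_tol x0"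
    and diff: "\<And>x. \<bar>\<alpha> $ (x, True) - \<alpha> $ (x, False)\<bar> \<le> \<epsilon>"
    and off: "\<And>x. x \<noteq> x0 \<Longrightarrow> \<bar>\<alpha> $ (x, False) - \<rho>\<bar> \<le> fair_tol x0"
  shows "\<alpha> \<in> Vfair \<pi> \<rho> \<epsilon>"
proof -
  let ?\<tau> = "fair_tol x0"
  have tau: "?\<tau> \<le> slack / 3" "2 * ?\<tau> / marginal x0 = 2 * slack / 3"
    using marginal_pos[of x0] marginal_le_one[of x0] slack_pos by (simp_all add: fair_tol_def mult_left_le_one_le)
  have off2: "\<bar>\<alpha> $ (x, b) - \<rho>\<bar> \<le> 2 * ?\<tau>" if "x \<noteq> x0" for x b
    using off[OF that] diff[of x] assms(3) by (cases b) auto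
  have "\<bar>\<alpha> $ (x, b) - \<rho>\<bar> \<le> slack" for x b
  proof (cases "x = x0")
    case True
    have "\<bar>\<alpha> $ (x0, b) - \<rho>\<bar> \<le> \<epsilon> + 2 * ?\<tau> / marginal x0"
      using deviation_at_x0[OF assms(1) _ off2 diff] assms(2,3) by simp
    then show ?thesis
      using True tau assms(3) by simp
  next
    case False
    then show ?thesis
      using off2[OF False, of b] tau slack_pos by linarith
  qed
  then show ?thesis
    using unit_interval_if_near_rho assms(1) diff by (auto simp: Vfair_def)
qed

lemma mask_inner_box:
  assumes "(\<Sum>i\<in>UNIV. \<alpha> $ i * \<pi> $ i) = \<rho>" "0 \<le> \<epsilon>" "\<epsilon> \<le> mask_tol x0"
    and diff: "\<bar>\<Sum>x\<in>UNIV. marginal x * (\<alpha> $ (x, True) - \<alpha> $ (x, False))\<bar> \<le> \<epsilon>"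
    and off: "\<And>i. fst i \<noteq> x0 \<Longrightarrow> \<bar>\<alpha> $ i - \<rho>\<bar> \<le> mask_tol x0"
  shows "\<alpha> \<in> Vmask \<pi> \<rho> \<epsilon>"
proof -
  let ?\<tau> = "mask_tol x0"
  have tau: "?\<tau> \<le> slack / 4" "4 * ?\<tau> / marginal x0 = slack" "0 \<le> ?\<tau>"
    using marginal_pos[of x0] marginal_le_one[of x0] slack_pos by (simp_all add: mask_tol_def mult_left_le_one_le)
  have "\<bar>\<Sum>x\<in>-{x0}. marginal x * (\<alpha> $ (x, True) - \<alpha> $ (x, False))\<bar> \<le> 2 * ?\<tau>"
  proof (rule abs_sum_Compl_le)
    fix x assume "x \<noteq> x0"
    then have "\<bar>\<alpha> $ (x, True) - \<alpha> $ (x, False)\<bar> \<le> 2 * ?\<tau>"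
      using off[of "(x, True)"] off[of "(x, False)"] by auto
    then show "\<bar>marginal x * (\<alpha> $ (x, True) - \<alpha> $ (x, False))\<bar> \<le> marginal x * (2 * ?\<tau>)"
      using marginal_pos[of x] by (simp add: abs_mult)
  qed (use tau in simp)
  moreover have "(\<Sum>x\<in>UNIV. marginal x * (\<alpha> $ (x, True) - \<alpha> $ (x, False)))
      = marginal x0 * (\<alpha> $ (x0, True) - \<alpha> $ (x0, False))
        + (\<Sum>x\<in>-{x0}. marginal x * (\<alpha> $ (x, True) - \<alpha> $ (x, False)))"
    by (simp add: sum.remove[of UNIV x0] Compl_eq_Diff_UNIV)
  ultimately have "marginal x0 * \<bar>\<alpha> $ (x0, True) - \<alpha> $ (x0, False)\<bar> \<le> 3 * ?\<tau>"
    using diff assms(3) marginal_pos[of x0] by (simp add: abs_mult)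
  then have "\<bar>\<alpha> $ (x0, True) - \<alpha> $ (x0, False)\<bar> \<le> 3 * ?\<tau> / marginal x0"
    using marginal_pos[of x0] by (simp add: field_simps)
  from deviation_at_x0[OF assms(1) tau(3) _ this]
  have near_x0: "\<bar>\<alpha> $ (x0, b) - \<rho>\<bar> \<le> slack" for b
    using off tau(2) by (simp add: add_divide_distrib[symmetric])
  have "\<bar>\<alpha> $ i - \<rho>\<bar> \<le> slack" for i
  proof (cases "fst i = x0")
    case True
    then show ?thesis
      using near_x0[of "snd i"] by (metis prod.collapse)
  next
    case False
    then show ?thesis
      using off[OF False] tau slack_pos by linarith
  qed
  then show ?thesis
    using unit_interval_if_near_rho assms(1) diff by (simp add: Vmask_def marginal_def)
qed

definition mask_chart :: "'x \<Rightarrow> real^('x \<times> bool) \<Rightarrow> real^('x \<times> bool)" where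
  "mask_chart x0 \<alpha> = (\<chi> i. if i = (x0, True)
    then \<Sum>x\<in>UNIV. marginal x * (\<alpha> $ (x, True) - \<alpha> $ (x, False)) else \<alpha> $ i)"

lemma linear_mask_chart: "linear (mask_chart x0)"
  by (auto intro!: linearI simp: mask_chart_def vec_eq_iff sum.distrib[symmetric] sum_distrib_left
      algebra_simps)

lemma eq_0_if_orthogonal_to_pi:
  assumes "inner \<gamma> \<pi> = 0" "\<gamma> $ (x0, True) = \<gamma> $ (x0, False)" "\<And>x b. x \<noteq> x0 \<Longrightarrow> \<gamma> $ (x, b) = 0"
  shows "\<gamma> = 0"
proof -
  have "(\<Sum>x\<in>-{x0}. \<gamma> $ (x, False) * \<pi> $ (x, False) + \<gamma> $ (x, True) * \<pi> $ (x, True)) = 0"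
    using assms(3) by (intro sum.neutral) auto
  then have "\<gamma> $ (x0, False) * marginal x0 = 0"
    using assms(1,2) unfolding inner_vec_real sum_pairs_remove[of _ x0] by (simp add: marginal_def algebra_simps)
  then have "\<gamma> $ (x0, b) = 0" for b
    using marginal_pos[of x0] assms(2) by (cases b) auto
  then have "\<gamma> $ i = 0" for i
    using assms(3) by (cases i; cases "fst i = x0") auto
  then show ?thesis
    by (simp add: vec_eq_iff)
qed

lemma fair_chart_kernel:
  assumes "inner \<gamma> \<pi> = 0" "\<And>i. i \<noteq> (x0, False) \<Longrightarrow> fair_chart \<gamma> $ i = 0"
  shows "\<gamma> = 0"
proof (rule eq_0_if_orthogonal_to_pi[OF assms(1)])
  show same: "\<gamma> $ (x, True) = \<gamma> $ (x, False)" for x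
    using assms(2)[of "(x, True)"] by (simp add: fair_chart_def)
  show "\<gamma> $ (x, b) = 0" if "x \<noteq> x0" for x b
    using assms(2)[of "(x, False)"] that same[of x] by (cases b) (simp_all add: fair_chart_def)
qed

lemma mask_chart_kernel:
  assumes "inner \<gamma> \<pi> = 0" "\<And>i. i \<noteq> (x0, False) \<Longrightarrow> mask_chart x0 \<gamma> $ i = 0"
  shows "\<gamma> = 0"
proof (rule eq_0_if_orthogonal_to_pi[OF assms(1)])
  show off: "\<gamma> $ (x, b) = 0" if "x \<noteq> x0" for x b
    using assms(2)[of "(x, b)"] that by (simp add: mask_chart_def)
  have "(\<Sum>x\<in>-{x0}. marginal x * (\<gamma> $ (x, True) - \<gamma> $ (x, False))) = 0"
    using off by (intro sum.neutral) auto
  then have "marginal x0 * (\<gamma> $ (x0, True) - \<gamma> $ (x0, False)) = 0"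
    using assms(2)[of "(x0, True)"] by (simp add: mask_chart_def sum.remove[of UNIV x0] Compl_eq_Diff_UNIV)
  then show "\<gamma> $ (x0, True) = \<gamma> $ (x0, False)"
    using marginal_pos[of x0] by simp
qed

lemma fair_volume_bounds:
  "\<exists>c C \<epsilon>0. 0 < c \<and> 0 < \<epsilon>0 \<and> (\<forall>\<epsilon>. 0 < \<epsilon> \<and> \<epsilon> \<le> \<epsilon>0 \<longrightarrow>
     c * \<epsilon> ^ CARD('x) \<le> hyp_volume \<pi> (Vfair \<pi> \<rho> \<epsilon>) \<and> hyp_volume \<pi> (Vfair \<pi> \<rho> \<epsilon>) \<le> C * \<epsilon> ^ CARD('x))"
proof -
  fix x0 :: 'x
  obtain e :: "'x bit0 \<Rightarrow> 'x \<times> bool" where "bij e"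
    using bij_bit0_prod_bool by blast
  interpret chart: hyperplane_chart e \<pi> fair_chart "(x0, False)" \<rho>
    by (rule hyperplane_chart.intro[OF \<open>bij e\<close> pi_nonzero linear_fair_chart]) (rule fair_chart_kernel)
  let ?\<tau> = "fair_tol x0"
  have "0 < ?\<tau>"
    using marginal_pos slack_pos by (simp add: fair_tol_def)
  have lower: "chart.chart_factor * (\<epsilon> ^ CARD('x) * ?\<tau> ^ (CARD('x) - 1)) \<le> hyp_volume \<pi> (Vfair \<pi> \<rho> \<epsilon>)"
    if "0 \<le> \<epsilon>" "\<epsilon> \<le> ?\<tau>" for \<epsilon>
  proof -
    have "chart.chart_factor * (\<Prod>i\<in>-{(x0, False)}. if snd i then \<epsilon> else ?\<tau>) \<le> hyp_volume \<pi> (Vfair \<pi> \<rho> \<epsilon>)"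
    proof (rule chart.hyp_volume_lower_bound[OF compact_Vfair Vfair_hyperplane,
          where c = "\<lambda>i. if snd i then 0 else \<rho>"])
      show "0 \<le> (if snd i then \<epsilon> else ?\<tau>)" for i :: "'x \<times> bool"
        using that \<open>0 < ?\<tau>\<close> by simp
      fix \<alpha>
      assume "inner \<alpha> \<pi> = \<rho>"
        and in_box: "\<And>i. i \<noteq> (x0, False) \<Longrightarrow>
          \<bar>fair_chart \<alpha> $ i - (if snd i then 0 else \<rho>)\<bar> \<le> (if snd i then \<epsilon> else ?\<tau>)"
      show "\<alpha> \<in> Vfair \<pi> \<rho> \<epsilon>"
      proof (rule fair_inner_box[OF _ that])
        show "(\<Sum>i\<in>UNIV. \<alpha> $ i * \<pi> $ i) = \<rho>"
          using \<open>inner \<alpha> \<pi> = \<rho>\<close> by (simp add: inner_vec_real)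
        show "\<bar>\<alpha> $ (x, True) - \<alpha> $ (x, False)\<bar> \<le> \<epsilon>" for x
          using in_box[of "(x, True)"] by (simp add: fair_chart_def)
        show "\<bar>\<alpha> $ (x, False) - \<rho>\<bar> \<le> ?\<tau>" if "x \<noteq> x0" for x
          using in_box[of "(x, False)"] that by (simp add: fair_chart_def)
      qed
    qed
    then show ?thesis
      by (simp add: prod_fair_box)
  qed
  have upper: "hyp_volume \<pi> (Vfair \<pi> \<rho> \<epsilon>) \<le> chart.chart_factor * (\<epsilon> ^ CARD('x) * (1 / 2) ^ (CARD('x) - 1))"
    if "0 \<le> \<epsilon>" for \<epsilon>
  proof -
    have "hyp_volume \<pi> (Vfair \<pi> \<rho> \<epsilon>) \<le> chart.chart_factor * (\<Prod>i\<in>-{(x0, False)}. if snd i then \<epsilon> else 1 / 2)"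
      using that
      by (intro chart.hyp_volume_upper_bound[OF compact_Vfair Vfair_hyperplane,
            where c = "\<lambda>i. if snd i then 0 else 1 / 2"])
        (auto simp: Vfair_def fair_chart_def abs_le_iff)
    then show ?thesis
      by (simp add: prod_fair_box)
  qed
  show ?thesis
    using lower upper chart.chart_factor_pos \<open>0 < ?\<tau>\<close>
    by (intro exI[of _ "chart.chart_factor * ?\<tau> ^ (CARD('x) - 1)"]
        exI[of _ "chart.chart_factor * (1 / 2) ^ (CARD('x) - 1)"] exI[of _ ?\<tau>])
      (simp add: mult_ac)
qed

lemma mask_volume_bounds:
  "\<exists>c C \<epsilon>0. 0 < c \<and> 0 < \<epsilon>0 \<and> (\<forall>\<epsilon>. 0 < \<epsilon> \<and> \<epsilon> \<le> \<epsilon>0 \<longrightarrow>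
     c * \<epsilon> \<le> hyp_volume \<pi> (Vmask \<pi> \<rho> \<epsilon>) \<and> hyp_volume \<pi> (Vmask \<pi> \<rho> \<epsilon>) \<le> C * \<epsilon>)"
proof -
  fix x0 :: 'x
  obtain e :: "'x bit0 \<Rightarrow> 'x \<times> bool" where "bij e"
    using bij_bit0_prod_bool by blast
  interpret chart: hyperplane_chart e \<pi> "mask_chart x0" "(x0, False)" \<rho>
    by (rule hyperplane_chart.intro[OF \<open>bij e\<close> pi_nonzero linear_mask_chart]) (rule mask_chart_kernel)
  let ?\<tau> = "mask_tol x0"
  have "0 < ?\<tau>"
    using marginal_pos slack_pos by (simp add: mask_tol_def)
  have lower: "chart.chart_factor * (\<epsilon> * (?\<tau> ^ (CARD('x) - 1))\<^sup>2) \<le> hyp_volume \<pi> (Vmask \<pi> \<rho> \<epsilon>)"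
    if "0 \<le> \<epsilon>" "\<epsilon> \<le> ?\<tau>" for \<epsilon>
  proof -
    have "chart.chart_factor * (\<Prod>i\<in>-{(x0, False)}. if i = (x0, True) then \<epsilon> else ?\<tau>)
        \<le> hyp_volume \<pi> (Vmask \<pi> \<rho> \<epsilon>)"
    proof (rule chart.hyp_volume_lower_bound[OF compact_Vmask Vmask_hyperplane,
          where c = "\<lambda>i. if i = (x0, True) then 0 else \<rho>"])
      show "0 \<le> (if i = (x0, True) then \<epsilon> else ?\<tau>)" for i
        using that \<open>0 < ?\<tau>\<close> by simp
      fix \<alpha>
      assume "inner \<alpha> \<pi> = \<rho>"
        and in_box: "\<And>i. i \<noteq> (x0, False) \<Longrightarrow>
          \<bar>mask_chart x0 \<alpha> $ i - (if i = (x0, True) then 0 else \<rho>)\<bar> \<le> (if i = (x0, True) then \<epsilon> else ?\<tau>)"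
      show "\<alpha> \<in> Vmask \<pi> \<rho> \<epsilon>"
      proof (rule mask_inner_box[OF _ that])
        show "(\<Sum>i\<in>UNIV. \<alpha> $ i * \<pi> $ i) = \<rho>"
          using \<open>inner \<alpha> \<pi> = \<rho>\<close> by (simp add: inner_vec_real)
        show "\<bar>\<Sum>x\<in>UNIV. marginal x * (\<alpha> $ (x, True) - \<alpha> $ (x, False))\<bar> \<le> \<epsilon>"
          using in_box[of "(x0, True)"] by (simp add: mask_chart_def)
        show "\<bar>\<alpha> $ i - \<rho>\<bar> \<le> ?\<tau>" if "fst i \<noteq> x0" for i
        proof -
          have "i \<noteq> (x0, False)" "i \<noteq> (x0, True)"
            using that by auto
          then show ?thesis
            using in_box[of i] by (simp add: mask_chart_def)
        qed
      qed
    qed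
    then show ?thesis
      by (simp add: prod_mask_box)
  qed
  have upper: "hyp_volume \<pi> (Vmask \<pi> \<rho> \<epsilon>) \<le> chart.chart_factor * (\<epsilon> * ((1 / 2) ^ (CARD('x) - 1))\<^sup>2)"
    if "0 \<le> \<epsilon>" for \<epsilon>
  proof -
    have "hyp_volume \<pi> (Vmask \<pi> \<rho> \<epsilon>)
        \<le> chart.chart_factor * (\<Prod>i\<in>-{(x0, False)}. if i = (x0, True) then \<epsilon> else 1 / 2)"
      using that
      by (intro chart.hyp_volume_upper_bound[OF compact_Vmask Vmask_hyperplane,
            where c = "\<lambda>i. if i = (x0, True) then 0 else 1 / 2"])
        (auto simp: Vmask_def mask_chart_def marginal_def abs_le_iff)
    then show ?thesis
      by (simp add: prod_mask_box)
  qed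
  show ?thesis
    using lower upper chart.chart_factor_pos \<open>0 < ?\<tau>\<close>
    by (intro exI[of _ "chart.chart_factor * (?\<tau> ^ (CARD('x) - 1))\<^sup>2"]
        exI[of _ "chart.chart_factor * ((1 / 2) ^ (CARD('x) - 1))\<^sup>2"] exI[of _ ?\<tau>])
      (simp add: mult_ac)
qed

end

theorem mainTheorem10:
  fixes \<pi> :: "real^('x::finite \<times> bool)" and \<rho> :: real
  assumes "CARD('x) \<ge> 2"
    and "\<forall>i. \<pi>$i > 0"
    and "(\<Sum>i\<in>UNIV. \<pi>$i) = 1"
    and "0 < \<rho>" and "\<rho> < 1"
  shows "\<exists>c C \<epsilon>0. 0 < c \<and> c \<le> C \<and> 0 < \<epsilon>0 \<and>
    (\<forall>\<epsilon>. 0 < \<epsilon> \<and> \<epsilon> \<le> \<epsilon>0 \<longrightarrow>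
       c * \<epsilon> ^ CARD('x) \<le> hyp_volume \<pi> (Vfair \<pi> \<rho> \<epsilon>) \<and>
       hyp_volume \<pi> (Vfair \<pi> \<rho> \<epsilon>) \<le> C * \<epsilon> ^ CARD('x) \<and>
       c * \<epsilon> \<le> hyp_volume \<pi> (Vmask \<pi> \<rho> \<epsilon>) \<and>
       hyp_volume \<pi> (Vmask \<pi> \<rho> \<epsilon>) \<le> C * \<epsilon>)"
proof -
  interpret joint_law \<pi> \<rho>
    using assms by unfold_locales auto
  obtain cf Cf \<epsilon>f where fair: "0 < cf" "0 < \<epsilon>f" "\<And>\<epsilon>. 0 < \<epsilon> \<Longrightarrow> \<epsilon> \<le> \<epsilon>f \<Longrightarrow>
      cf * \<epsilon> ^ CARD('x) \<le> hyp_volume \<pi> (Vfair \<pi> \<rho> \<epsilon>) \<and> hyp_volume \<pi> (Vfair \<pi> \<rho> \<epsilon>) \<le> Cf * \<epsilon> ^ CARD('x)"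
    using fair_volume_bounds by blast
  obtain cm Cm \<epsilon>m where mask: "0 < cm" "0 < \<epsilon>m" "\<And>\<epsilon>. 0 < \<epsilon> \<Longrightarrow> \<epsilon> \<le> \<epsilon>m \<Longrightarrow>
      cm * \<epsilon> \<le> hyp_volume \<pi> (Vmask \<pi> \<rho> \<epsilon>) \<and> hyp_volume \<pi> (Vmask \<pi> \<rho> \<epsilon>) \<le> Cm * \<epsilon>"
    using mask_volume_bounds by blast
  define c where "c = min cf cm"
  define C where "C = max (max Cf Cm) c"
  have "c * \<epsilon> ^ CARD('x) \<le> hyp_volume \<pi> (Vfair \<pi> \<rho> \<epsilon>) \<and> hyp_volume \<pi> (Vfair \<pi> \<rho> \<epsilon>) \<le> C * \<epsilon> ^ CARD('x) \<and>
      c * \<epsilon> \<le> hyp_volume \<pi> (Vmask \<pi> \<rho> \<epsilon>) \<and> hyp_volume \<pi> (Vmask \<pi> \<rho> \<epsilon>) \<le> C * \<epsilon>"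
    if "0 < \<epsilon>" "\<epsilon> \<le> min \<epsilon>f \<epsilon>m" for \<epsilon>
  proof -
    have "c * \<epsilon> ^ CARD('x) \<le> cf * \<epsilon> ^ CARD('x)" "Cf * \<epsilon> ^ CARD('x) \<le> C * \<epsilon> ^ CARD('x)"
      "c * \<epsilon> \<le> cm * \<epsilon>" "Cm * \<epsilon> \<le> C * \<epsilon>"
      using that(1) by (simp_all add: c_def C_def mult_right_mono)
    then show ?thesis
      using fair(3)[OF that(1)] mask(3)[OF that(1)] that(2) by auto
  qed
  moreover have "0 < c" "c \<le> C" "0 < min \<epsilon>f \<epsilon>m"
    using fair mask by (simp_all add: c_def C_def)
  ultimately show ?thesis
    by blast
qed

end
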